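(* Let $n\ge1$, let $k,k'$ be divisors of $n$, and let $\mathbf{S}=\mathbf{P\L}_k\times\mathbf{P\L}_{k'}$. (1) Let $\mathbf{R}$ be a subalgebra of $\mathbf{P\L}_n\times\mathbf{P\L}_n$ satisfying: - $\mathbf{R}\subseteq{\le}$; - $\mathbf{R}$ is not the diagonal of a subalgebra of $\mathbf{P\L}_n$; - $\mathrm{pr}_1(\mathbf{R})\times\mathrm{pr}_2(\mathbf{R})=\mathbf{S}$. For each $i=0,\dots,k$ let $y_i$ be the least element of $\mathbf{P\L}_{k'}$ with $(\tfrac ik,y_i)\in\mathbf{R}$. Such $y_i$ exists, $y_0=0$ and $y_k=1$, and $$\mathbf{R}=\bigcup_{i=0}^k C_{(\frac ik,y_i),\mathbf{S}}.$$ (2) Let $y_0\le y_1\le\dots\le y_k$ be elements of $\mathbf{P\L}_{k'}$ with $y_0=0$, $y_k=1$ and $\tfrac ik\le y_i$ for $i=1,\dots,k-1$. Put $\mathbf{R}=\bigcup_{i=0}^k C_{(\frac ik,y_i),\mathbf{S}}$. Then $\mathbf{R}$ is a subuniverse of $\mathbf{S}$ if and only if $$(\tfrac ik,y_i)\odot(\tfrac jk,y_j)\in\mathbf{R}\quad\text{and}\quad(\tfrac ik,y_i)\oplus(\tfrac jk,y_j)\in\mathbf{R}$$ for all $i,j\in\{1,\dots,k-1\}$. Here the operations are computed componentwise.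
   Context: For $n\ge 1$, the algebra $\mathbf{P\L}_n=\langle\{0,\tfrac1n,\dots,\tfrac{n-1}{n},1\},\wedge,\vee,\odot,\oplus,0,1\rangle$ has $\wedge=\min$, $\vee=\max$, $x\odot y=\max\{0,x+y-1\}$ and $x\oplus y=\min\{1,x+y\}$. For a divisor $k$ of $n$, $\mathbf{P\L}_k$ denotes the subalgebra of $\mathbf{P\L}_n$ with universe $\{\tfrac ik:0\le i\le k\}$. The order is ${\le}=\{(x,y): x\le y\}\subseteq\mathbf{P\L}_n^2$. For a product $\mathbf{S}$ of two subalgebras of $\mathbf{P\L}_n$ and $(x,y)\in\mathbf{S}$ with $x\le y$, define $$C_{(x,y),\mathbf{S}}=\{(x',y')\in \mathbf{S}: x'\le x,\ y\le y'\}.$$ *)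

theory Defs
  imports Complex_Main
begin

definition PL :: "nat \<Rightarrow> real set" where
  "PL n = {real i / real n | i. i \<le> n}"

definition luk_odot :: "real \<Rightarrow> real \<Rightarrow> real" where
  "luk_odot x y = max 0 (x + y - 1)"

definition luk_oplus :: "real \<Rightarrow> real \<Rightarrow> real" where
  "luk_oplus x y = min 1 (x + y)"

definition pmin :: "real \<times> real \<Rightarrow> real \<times> real \<Rightarrow> real \<times> real" where
  "pmin p q = (min (fst p) (fst q), min (snd p) (snd q))"

definition pmax :: "real \<times> real \<Rightarrow> real \<times> real \<Rightarrow> real \<times> real" where
  "pmax p q = (max (fst p) (fst q), max (snd p) (snd q))"

definition podot :: "real \<times> real \<Rightarrow> real \<times> real \<Rightarrow> real \<times> real" where
  "podot p q = (luk_odot (fst p) (fst q), luk_odot (snd p) (snd q))"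

definition poplus :: "real \<times> real \<Rightarrow> real \<times> real \<Rightarrow> real \<times> real" where
  "poplus p q = (luk_oplus (fst p) (fst q), luk_oplus (snd p) (snd q))"

definition pl_subalg :: "nat \<Rightarrow> real set \<Rightarrow> bool" where
  "pl_subalg n A \<longleftrightarrow> A \<subseteq> PL n \<and> 0 \<in> A \<and> 1 \<in> A \<and>
     (\<forall>x\<in>A. \<forall>y\<in>A. min x y \<in> A \<and> max x y \<in> A \<and> luk_odot x y \<in> A \<and> luk_oplus x y \<in> A)"

definition pair_subuniv :: "(real \<times> real) set \<Rightarrow> (real \<times> real) set \<Rightarrow> bool" where
  "pair_subuniv S R \<longleftrightarrow> R \<subseteq> S \<and> (0, 0) \<in> R \<and> (1, 1) \<in> R \<and>
     (\<forall>p\<in>R. \<forall>q\<in>R. pmin p q \<in> R \<and> pmax p q \<in> R \<and> podot p q \<in> R \<and> poplus p q \<in> R)"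

definition Cset :: "real \<times> real \<Rightarrow> (real \<times> real) set \<Rightarrow> (real \<times> real) set" where
  "Cset p S = {q \<in> S. fst q \<le> fst p \<and> snd p \<le> snd q}"

end

theory Submission
  imports Defs
begin

text \<open>Part (1): if \<open>R \<subseteq> \<le>\<close> is not diagonal it contains a pair \<open>a < b\<close>, and repeatedly
  applying \<open>p \<odot> p\<close> or \<open>p \<oplus> p\<close> doubles the gap \<open>b - a\<close> until \<open>(0, 1) \<in> R\<close>. Using
  \<open>(0, 1)\<close>, the lattice operations and the full projections, \<open>R\<close> is closed upwards in
  the second and downwards in the first coordinate within \<open>S\<close>, so it is the union of the
  cones \<open>C\<close> at the least elements \<open>y\<^sub>i\<close> of its fibres.
  Part (2): all four operations are coordinatewise monotone, so they map cones into the
  cone of the combined vertices; hence a union of cones is closed as soon as its vertices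
  combine into it. For \<open>\<and>, \<or>\<close> this holds because the vertices form a chain, and for
  \<open>\<odot>, \<oplus>\<close> with a vertex \<open>(0, 0)\<close> or \<open>(1, 1)\<close> because these are units or absorbing.\<close>

lemma PL_bounded: "x \<in> PL m \<Longrightarrow> 0 \<le> x \<and> x \<le> 1"
  unfolding PL_def by (auto simp: divide_le_eq_1)

lemma finite_PL: "finite (PL m)"
proof -
  have "PL m = (\<lambda>i. real i / real m) ` {..m}"
    unfolding PL_def by auto
  then show ?thesis by simp
qed

lemma frac_in_PL: "i \<le> m \<Longrightarrow> real i / real m \<in> PL m"
  unfolding PL_def by auto

lemma zero_in_PL: "0 \<in> PL m"
  using frac_in_PL[of 0 m] by simp

lemma one_in_PL: "m \<ge> 1 \<Longrightarrow> 1 \<in> PL m"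
  using frac_in_PL[of m m] by simp

lemma luk_odot_frac:
  assumes "m > 0"
  shows "luk_odot (real i / real m) (real j / real m) = real (i + j - m) / real m"
  using assms by (cases "m \<le> i + j") (auto simp: luk_odot_def field_simps of_nat_diff)

lemma luk_oplus_frac:
  assumes "m > 0"
  shows "luk_oplus (real i / real m) (real j / real m) = real (min m (i + j)) / real m"
  using assms by (cases "m \<le> i + j") (auto simp: luk_oplus_def field_simps min_def)

lemma luk_odot_in_PL:
  assumes "x \<in> PL m" "y \<in> PL m"
  shows "luk_odot x y \<in> PL m"
proof (cases "m = 0")
  case True
  with assms show ?thesis by (simp add: PL_def luk_odot_def)
next
  case False
  from assms obtain i j where "x = real i / real m" "y = real j / real m" "i \<le> m" "j \<le> m"
    unfolding PL_def by auto
  with False show ?thesis by (simp add: luk_odot_frac frac_in_PL)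
qed

lemma luk_oplus_in_PL:
  assumes "x \<in> PL m" "y \<in> PL m"
  shows "luk_oplus x y \<in> PL m"
proof (cases "m = 0")
  case True
  with assms show ?thesis by (simp add: PL_def luk_oplus_def)
next
  case False
  from assms obtain i j where "x = real i / real m" "y = real j / real m" "i \<le> m" "j \<le> m"
    unfolding PL_def by auto
  with False show ?thesis by (simp add: luk_oplus_frac frac_in_PL)
qed

definition componentwise :: "(real \<Rightarrow> real \<Rightarrow> real) \<Rightarrow> real \<times> real \<Rightarrow> real \<times> real \<Rightarrow> real \<times> real"
  where "componentwise f p q = (f (fst p) (fst q), f (snd p) (snd q))"

lemma pmin_eq_componentwise: "pmin = componentwise min"
  and pmax_eq_componentwise: "pmax = componentwise max"
  and podot_eq_componentwise: "podot = componentwise luk_odot"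
  and poplus_eq_componentwise: "poplus = componentwise luk_oplus"
  by (simp_all add: fun_eq_iff componentwise_def pmin_def pmax_def podot_def poplus_def)

lemma luk_odot_mono: "x \<le> x' \<Longrightarrow> y \<le> y' \<Longrightarrow> luk_odot x y \<le> luk_odot x' y'"
  by (simp add: luk_odot_def)

lemma luk_oplus_mono: "x \<le> x' \<Longrightarrow> y \<le> y' \<Longrightarrow> luk_oplus x y \<le> luk_oplus x' y'"
  by (simp add: luk_oplus_def)

lemma Cset_trans: "p \<in> Cset q S \<Longrightarrow> q \<in> Cset r T \<Longrightarrow> p \<in> Cset r S"
  by (auto simp: Cset_def)

lemma componentwise_mem_Cset:
  assumes "\<And>a b c d. a \<le> b \<Longrightarrow> c \<le> d \<Longrightarrow> f a c \<le> f b d"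
    and "p' \<in> Cset p S" "q' \<in> Cset q S" "componentwise f p' q' \<in> S"
  shows "componentwise f p' q' \<in> Cset (componentwise f p q) S"
  using assms by (auto simp: Cset_def componentwise_def)

lemma union_Cset_componentwise_closed:
  assumes mono: "\<And>a b c d. a \<le> b \<Longrightarrow> c \<le> d \<Longrightarrow> f a c \<le> f b d"
    and S_closed: "\<And>p q. p \<in> S \<Longrightarrow> q \<in> S \<Longrightarrow> componentwise f p q \<in> S"
    and generators_closed: "\<And>g h. g \<in> G \<Longrightarrow> h \<in> G \<Longrightarrow> componentwise f g h \<in> (\<Union>w\<in>G. Cset w S)"
    and p: "p \<in> (\<Union>w\<in>G. Cset w S)" and q: "q \<in> (\<Union>w\<in>G. Cset w S)"
  shows "componentwise f p q \<in> (\<Union>w\<in>G. Cset w S)"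
proof -
  from p q obtain g h where g: "g \<in> G" "p \<in> Cset g S" and h: "h \<in> G" "q \<in> Cset h S"
    by blast
  from generators_closed[OF g(1) h(1)] obtain w where w: "w \<in> G" "componentwise f g h \<in> Cset w S"
    by blast
  have "componentwise f p q \<in> S"
    using g h S_closed by (simp add: Cset_def)
  then have "componentwise f p q \<in> Cset (componentwise f g h) S"
    using componentwise_mem_Cset[of f] mono g(2) h(2) by blast
  with w show ?thesis
    by (blast intro: Cset_trans)
qed

lemma pair_subuniv_closed:
  assumes "pair_subuniv S R" "p \<in> R" "q \<in> R"
  shows "pmin p q \<in> R" "pmax p q \<in> R" "podot p q \<in> R" "poplus p q \<in> R"
  using assms unfolding pair_subuniv_def by blast+

lemma PL_times_PL_unit_square: "PL m \<times> PL m' \<subseteq> {0..1} \<times> {0..1}"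
  using PL_bounded by fastforce

lemma zero_one_mem_of_zero_pos:
  assumes "pair_subuniv S R" and "(0, d) \<in> R" "0 < d" "d \<le> 1"
  shows "(0, 1) \<in> R"
proof -
  have multiple: "(0, min 1 (real (Suc m) * d)) \<in> R" for m
  proof (induction m)
    case 0
    with assms show ?case by simp
  next
    case (Suc m)
    from pair_subuniv_closed(4)[OF assms(1) Suc assms(2)]
    have "poplus (0, min 1 (real (Suc m) * d)) (0, d) \<in> R" .
    moreover have "poplus (0, min 1 (real (Suc m) * d)) (0, d) = (0, min 1 (real (Suc (Suc m)) * d))"
      using assms by (simp add: poplus_def luk_oplus_def min_def algebra_simps)
    ultimately show ?case by simp
  qed
  obtain m where "1 < real m * d"
    using reals_Archimedean3[OF \<open>0 < d\<close>] by blast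
  with \<open>0 < d\<close> have "1 \<le> real (Suc m) * d"
    by (simp add: algebra_simps)
  with multiple[of m] show ?thesis by simp
qed

text \<open>Squaring \<open>p \<odot> p\<close> or doubling \<open>p \<oplus> p\<close> a pair \<open>p = (a, b)\<close> doubles the gap
  \<open>b - a\<close>, unless \<open>a < 1/2 < b\<close>; then squaring yields \<open>(0, 2b - 1)\<close>.\<close>
lemma zero_one_mem_of_gap:
  assumes su: "pair_subuniv S R" and S01: "S \<subseteq> {0..1} \<times> {0..1}"
    and "(a, b) \<in> R" "a < b" "1 / 2 ^ m \<le> b - a"
  shows "(0, 1) \<in> R"
proof -
  have R01: "R \<subseteq> {0..1} \<times> {0..1}"
    using su S01 unfolding pair_subuniv_def by blast
  show ?thesis
    using assms(3-5)
  proof (induction m arbitrary: a b)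
    case 0
    with R01 have "a = 0" "b = 1" by force+
    with 0 show ?case by simp
  next
    case (Suc m)
    have square: "podot (a, b) (a, b) \<in> R" and double: "poplus (a, b) (a, b) \<in> R"
      using pair_subuniv_closed[OF su Suc.prems(1) Suc.prems(1)] by blast+
    consider "1/2 \<le> a" | "b \<le> 1/2" | "a < 1/2" "1/2 < b" by linarith
    then show ?case
    proof cases
      case 1
      with square Suc.prems(2) have "(2*a - 1, 2*b - 1) \<in> R"
        by (simp add: podot_def luk_odot_def)
      with Suc.IH Suc.prems show ?thesis by (simp add: field_simps)
    next
      case 2
      with double Suc.prems(2) have "(2*a, 2*b) \<in> R" by (simp add: poplus_def luk_oplus_def)
      with Suc.IH Suc.prems show ?thesis by (simp add: field_simps)
    next
      case 3
      with square have "(0, 2*b - 1) \<in> R" by (simp add: podot_def luk_odot_def)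
      moreover have "b \<le> 1" using R01 Suc.prems(1) by auto
      ultimately show ?thesis using zero_one_mem_of_zero_pos[OF su] 3 by simp
    qed
  qed
qed

lemma zero_one_mem_of_lt:
  assumes "pair_subuniv S R" "S \<subseteq> {0..1} \<times> {0..1}" "(a, b) \<in> R" "a < b"
  shows "(0, 1) \<in> R"
proof -
  obtain m where "1 / 2 ^ m < b - a"
    using real_arch_pow_inv[of "b - a" "1/2"] \<open>a < b\<close> by (auto simp: power_divide)
  with assms show ?thesis
    by (blast intro: zero_one_mem_of_gap less_imp_le)
qed

lemma diagonal_of_pair_subuniv:
  assumes su: "pair_subuniv (PL n \<times> PL n) R" and diag: "\<forall>p\<in>R. fst p = snd p"
  shows "pl_subalg n (fst ` R) \<and> R = {(a, a) | a. a \<in> fst ` R}"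
proof
  show R_eq: "R = {(a, a) | a. a \<in> fst ` R}"
    using diag by (force simp: prod_eq_iff)
  show "pl_subalg n (fst ` R)"
    unfolding pl_subalg_def
  proof (intro conjI ballI)
    show "fst ` R \<subseteq> PL n" "0 \<in> fst ` R" "1 \<in> fst ` R"
      using su unfolding pair_subuniv_def by force+
    fix x y assume "x \<in> fst ` R" "y \<in> fst ` R"
    with R_eq have "(x, x) \<in> R" "(y, y) \<in> R" by auto
    from pair_subuniv_closed[OF su this] show "min x y \<in> fst ` R" "max x y \<in> fst ` R"
        "luk_odot x y \<in> fst ` R" "luk_oplus x y \<in> fst ` R"
      unfolding pmin_def pmax_def podot_def poplus_def by force+
  qed
qed

text \<open>With \<open>(0, 1)\<close> available, \<open>(x, w) \<oplus> (0, 1) = (x, 1)\<close> and \<open>(0, 1) \<odot> (u, z) = (0, z)\<close>,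
  and \<open>(x, z) = ((x, 1) \<and> (c, d)) \<or> (0, z)\<close>.\<close>
lemma mem_of_dominated:
  assumes su: "pair_subuniv S R" and S01: "S \<subseteq> {0..1} \<times> {0..1}" and zero_one: "(0, 1) \<in> R"
    and cd: "(c, d) \<in> R" and "x \<in> fst ` R" "z \<in> snd ` R" "x \<le> c" "d \<le> z"
  shows "(x, z) \<in> R"
proof -
  have R01: "R \<subseteq> {0..1} \<times> {0..1}"
    using su S01 unfolding pair_subuniv_def by blast
  from assms obtain w u where xw: "(x, w) \<in> R" and uz: "(u, z) \<in> R" by force
  have "poplus (x, w) (0, 1) = (x, 1)"
    using R01 xw by (force simp: poplus_def luk_oplus_def)
  with pair_subuniv_closed(4)[OF su xw zero_one] have x1: "(x, 1) \<in> R" by simp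
  have "podot (0, 1) (u, z) = (0, z)"
    using R01 uz by (force simp: podot_def luk_odot_def)
  with pair_subuniv_closed(3)[OF su zero_one uz] have z0: "(0, z) \<in> R" by simp
  have "pmax (pmin (x, 1) (c, d)) (0, z) = (x, z)"
    using R01 x1 z0 cd \<open>x \<le> c\<close> \<open>d \<le> z\<close> by (force simp: pmin_def pmax_def)
  with pair_subuniv_closed(2)[OF su pair_subuniv_closed(1)[OF su x1 cd] z0] show ?thesis by simp
qed

lemma leq_pair_subuniv_eq_union_Cset:
  fixes n k k' :: nat
  assumes "k \<ge> 1" and su: "pair_subuniv (PL n \<times> PL n) R"
    and leq: "\<forall>p\<in>R. fst p \<le> snd p"
    and not_diagonal: "\<not> (\<exists>A. pl_subalg n A \<and> R = {(a, a) | a. a \<in> A})"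
    and projections: "fst ` R \<times> snd ` R = PL k \<times> PL k'"
  shows "\<exists>y :: nat \<Rightarrow> real.
            (\<forall>i\<le>k. y i \<in> PL k' \<and> (real i / real k, y i) \<in> R
                 \<and> (\<forall>z\<in>PL k'. (real i / real k, z) \<in> R \<longrightarrow> y i \<le> z))
          \<and> y 0 = 0 \<and> y k = 1
          \<and> R = (\<Union>i\<in>{0..k}. Cset (real i / real k, y i) (PL k \<times> PL k'))"
proof -
  note S01 = PL_times_PL_unit_square[of n n]
  have fst_R: "fst ` R = PL k" and snd_R: "snd ` R = PL k'"
    using projections zero_in_PL[of k] zero_in_PL[of k'] unfolding times_eq_iff by auto
  obtain a b where "(a, b) \<in> R" "a < b"
    using diagonal_of_pair_subuniv[OF su] not_diagonal leq by force
  with su S01 have zero_one: "(0, 1) \<in> R"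
    by (rule zero_one_mem_of_lt)
  define y where "y i = Min {z \<in> PL k'. (real i / real k, z) \<in> R}" for i
  have y_least: "y i \<in> PL k' \<and> (real i / real k, y i) \<in> R
                 \<and> (\<forall>z\<in>PL k'. (real i / real k, z) \<in> R \<longrightarrow> y i \<le> z)" if "i \<le> k" for i
  proof -
    let ?Z = "{z \<in> PL k'. (real i / real k, z) \<in> R}"
    have "finite ?Z" using finite_PL by simp
    moreover have "?Z \<noteq> {}"
      using fst_R snd_R frac_in_PL[OF that] by force
    ultimately show ?thesis
      using Min_in Min_le unfolding y_def by auto
  qed
  have "y 0 = 0"
  proof (rule antisym)
    show "y 0 \<le> 0"
      using y_least[of 0] su zero_in_PL[of k'] unfolding pair_subuniv_def by simp
    show "0 \<le> y 0"
      using y_least[of 0] PL_bounded by blast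
  qed
  moreover have "y k = 1"
  proof (rule antisym)
    show "y k \<le> 1"
      using y_least[of k] PL_bounded by blast
    show "1 \<le> y k"
      using y_least[of k] leq \<open>k \<ge> 1\<close> by fastforce
  qed
  moreover have "R = (\<Union>i\<in>{0..k}. Cset (real i / real k, y i) (PL k \<times> PL k'))"
  proof
    show "R \<subseteq> (\<Union>i\<in>{0..k}. Cset (real i / real k, y i) (PL k \<times> PL k'))"
    proof
      fix p assume "p \<in> R"
      then have p: "fst p \<in> PL k" "snd p \<in> PL k'"
        using fst_R snd_R by blast+
      then obtain i where i: "i \<le> k" "fst p = real i / real k"
        unfolding PL_def by blast
      with \<open>p \<in> R\<close> p y_least[OF i(1)] have "y i \<le> snd p"
        by (metis prod.collapse)
      with i p show "p \<in> (\<Union>i\<in>{0..k}. Cset (real i / real k, y i) (PL k \<times> PL k'))"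
        unfolding Cset_def by (auto simp: mem_Times_iff)
    qed
    show "(\<Union>i\<in>{0..k}. Cset (real i / real k, y i) (PL k \<times> PL k')) \<subseteq> R"
    proof
      fix p assume "p \<in> (\<Union>i\<in>{0..k}. Cset (real i / real k, y i) (PL k \<times> PL k'))"
      then obtain i where "i \<le> k" "fst p \<in> fst ` R" "snd p \<in> snd ` R"
          "fst p \<le> real i / real k" "y i \<le> snd p"
        unfolding Cset_def fst_R snd_R by (auto simp: mem_Times_iff)
      with y_least[of i] mem_of_dominated[OF su S01 zero_one] show "p \<in> R"
        by (metis prod.collapse)
    qed
  qed
  ultimately show ?thesis
    using y_least by blast
qed

lemma podot_commute: "podot p q = podot q p"
  and poplus_commute: "poplus p q = poplus q p"
  by (simp_all add: podot_def poplus_def luk_odot_def luk_oplus_def add.commute)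

lemma podot_zero_left: "p \<in> {0..1} \<times> {0..1} \<Longrightarrow> podot (0, 0) p = (0, 0)"
  and poplus_zero_left: "p \<in> {0..1} \<times> {0..1} \<Longrightarrow> poplus (0, 0) p = p"
  and podot_one_left: "p \<in> {0..1} \<times> {0..1} \<Longrightarrow> podot (1, 1) p = p"
  and poplus_one_left: "p \<in> {0..1} \<times> {0..1} \<Longrightarrow> poplus (1, 1) p = (1, 1)"
  by (auto simp: podot_def poplus_def luk_odot_def luk_oplus_def prod_eq_iff mem_Times_iff)

lemma PL_times_PL_pair_subuniv:
  assumes "k \<ge> 1" "k' \<ge> 1"
  shows "pair_subuniv (PL k \<times> PL k') (PL k \<times> PL k')"
  unfolding pair_subuniv_def
proof (intro conjI ballI)
  show "(0, 0) \<in> PL k \<times> PL k'" "(1, 1) \<in> PL k \<times> PL k'"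
    using assms zero_in_PL one_in_PL by simp_all
  fix p q assume "p \<in> PL k \<times> PL k'" "q \<in> PL k \<times> PL k'"
  then show "pmin p q \<in> PL k \<times> PL k'" "pmax p q \<in> PL k \<times> PL k'"
      "podot p q \<in> PL k \<times> PL k'" "poplus p q \<in> PL k \<times> PL k'"
    by (auto simp: mem_Times_iff pmin_def pmax_def podot_def poplus_def min_def max_def
        luk_odot_in_PL luk_oplus_in_PL)
qed simp

lemma union_Cset_pair_subuniv:
  fixes P :: "nat \<Rightarrow> real \<times> real" and k :: nat and S :: "(real \<times> real) set"
  defines "R \<equiv> \<Union>i\<in>{0..k}. Cset (P i) S"
  assumes S: "pair_subuniv S S" "S \<subseteq> {0..1} \<times> {0..1}"
    and P_S: "\<And>i. i \<le> k \<Longrightarrow> P i \<in> S"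
    and P_chain: "\<And>i j. i \<le> j \<Longrightarrow> j \<le> k \<Longrightarrow> fst (P i) \<le> fst (P j) \<and> snd (P i) \<le> snd (P j)"
    and P_0: "P 0 = (0, 0)" and P_k: "P k = (1, 1)"
    and interior: "\<And>i j. 1 \<le> i \<Longrightarrow> i \<le> k - 1 \<Longrightarrow> 1 \<le> j \<Longrightarrow> j \<le> k - 1 \<Longrightarrow>
                     podot (P i) (P j) \<in> R \<and> poplus (P i) (P j) \<in> R"
  shows "pair_subuniv S R"
proof -
  have P_mem: "P i \<in> R" if "i \<le> k" for i
    using that P_S unfolding R_def Cset_def by force
  have zero_mem: "(0, 0) \<in> R" and one_mem: "(1, 1) \<in> R"
    using P_mem[of 0] P_mem[of k] P_0 P_k by simp_all
  have lattice_vertices: "componentwise min (P i) (P j) \<in> R \<and> componentwise max (P i) (P j) \<in> R"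
    if "i \<le> k" "j \<le> k" for i j
  proof -
    have "componentwise min (P i) (P j) = P (min i j) \<and> componentwise max (P i) (P j) = P (max i j)"
      using P_chain[of i j] P_chain[of j i] that
      by (cases "i \<le> j") (auto simp: componentwise_def min_def max_def prod_eq_iff)
    with that P_mem show ?thesis by (simp add: min_def max_def)
  qed
  have mv_vertices: "podot (P i) (P j) \<in> R \<and> poplus (P i) (P j) \<in> R"
    if ij: "i \<le> k" "j \<le> k" for i j
  proof -
    have P_unit_square: "P l \<in> {0..1} \<times> {0..1}" if "l \<le> k" for l
      using that P_S S(2) by blast
    consider "i = 0" | "j = 0" | "i = k" | "j = k" | "1 \<le> i \<and> i \<le> k - 1 \<and> 1 \<le> j \<and> j \<le> k - 1"
      using ij by fastforce
    then show ?thesis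
    proof cases
      case 1
      then show ?thesis
        using ij P_0 zero_mem P_mem P_unit_square podot_zero_left poplus_zero_left by simp
    next
      case 2
      then show ?thesis
        using ij P_0 zero_mem P_mem P_unit_square podot_zero_left poplus_zero_left
        by (simp add: podot_commute poplus_commute)
    next
      case 3
      then show ?thesis
        using ij P_k one_mem P_mem P_unit_square podot_one_left poplus_one_left by simp
    next
      case 4
      then show ?thesis
        using ij P_k one_mem P_mem P_unit_square podot_one_left poplus_one_left
        by (simp add: podot_commute poplus_commute)
    next
      case 5
      with interior show ?thesis by blast
    qed
  qed
  have closed: "componentwise f p q \<in> R"
    if f: "f \<in> {min, max, luk_odot, luk_oplus}" and "p \<in> R" "q \<in> R" for f p q
  proof -
    have "R = (\<Union>w\<in>P ` {0..k}. Cset w S)"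
      unfolding R_def by simp
    moreover have "componentwise f p q \<in> (\<Union>w\<in>P ` {0..k}. Cset w S)"
    proof (rule union_Cset_componentwise_closed[where f = f])
      show "f a c \<le> f b d" if "a \<le> b" "c \<le> d" for a b c d
        using f that luk_odot_mono luk_oplus_mono by (auto intro: min.mono max.mono)
      show "componentwise f p q \<in> S" if "p \<in> S" "q \<in> S" for p q
        using f pair_subuniv_closed[OF S(1) that]
        by (auto simp: pmin_eq_componentwise pmax_eq_componentwise
            podot_eq_componentwise poplus_eq_componentwise)
      show "componentwise f g h \<in> (\<Union>w\<in>P ` {0..k}. Cset w S)"
        if "g \<in> P ` {0..k}" "h \<in> P ` {0..k}" for g h
        using that f lattice_vertices mv_vertices
        unfolding R_def podot_eq_componentwise poplus_eq_componentwise by auto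
    qed (use \<open>p \<in> R\<close> \<open>q \<in> R\<close> in \<open>simp_all add: R_def\<close>)
    ultimately show ?thesis by simp
  qed
  show "pair_subuniv S R"
    unfolding pair_subuniv_def
    using closed[of min] closed[of max] closed[of luk_odot] closed[of luk_oplus] zero_mem one_mem
    by (auto simp: R_def Cset_def pmin_eq_componentwise pmax_eq_componentwise
        podot_eq_componentwise poplus_eq_componentwise)
qed

lemma union_Cset_pair_subuniv_iff:
  fixes k k' :: nat and y :: "nat \<Rightarrow> real"
  assumes "k \<ge> 1" "k' \<ge> 1" and y_PL: "\<forall>i\<le>k. y i \<in> PL k'"
    and y_mono: "\<forall>i j. i \<le> j \<and> j \<le> k \<longrightarrow> y i \<le> y j"
    and "y 0 = 0" "y k = 1"
  shows "(let R = (\<Union>i\<in>{0..k}. Cset (real i / real k, y i) (PL k \<times> PL k')) in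
            pair_subuniv (PL k \<times> PL k') R \<longleftrightarrow>
            (\<forall>i j. 1 \<le> i \<and> i \<le> k - 1 \<and> 1 \<le> j \<and> j \<le> k - 1 \<longrightarrow>
               podot (real i / real k, y i) (real j / real k, y j) \<in> R
             \<and> poplus (real i / real k, y i) (real j / real k, y j) \<in> R))"
proof -
  define S where "S = PL k \<times> PL k'"
  define P where "P i = (real i / real k, y i)" for i
  define R where "R = (\<Union>i\<in>{0..k}. Cset (P i) S)"
  have P_S: "P i \<in> S" if "i \<le> k" for i
    using that y_PL frac_in_PL[OF that] unfolding P_def S_def by simp
  have "pair_subuniv S R \<longleftrightarrow>
     (\<forall>i j. 1 \<le> i \<and> i \<le> k - 1 \<and> 1 \<le> j \<and> j \<le> k - 1 \<longrightarrow>
               podot (P i) (P j) \<in> R \<and> poplus (P i) (P j) \<in> R)"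
  proof
    assume "pair_subuniv S R"
    moreover have "P i \<in> R" if "i \<le> k" for i
      using that P_S unfolding R_def Cset_def by force
    ultimately show "\<forall>i j. 1 \<le> i \<and> i \<le> k - 1 \<and> 1 \<le> j \<and> j \<le> k - 1 \<longrightarrow>
               podot (P i) (P j) \<in> R \<and> poplus (P i) (P j) \<in> R"
      using pair_subuniv_closed by (meson diff_le_self order_trans)
  next
    assume "\<forall>i j. 1 \<le> i \<and> i \<le> k - 1 \<and> 1 \<le> j \<and> j \<le> k - 1 \<longrightarrow>
               podot (P i) (P j) \<in> R \<and> poplus (P i) (P j) \<in> R"
    then show "pair_subuniv S R"
      unfolding R_def
    proof (intro union_Cset_pair_subuniv)
      show "pair_subuniv S S" "S \<subseteq> {0..1} \<times> {0..1}"
        unfolding S_def using PL_times_PL_pair_subuniv \<open>k \<ge> 1\<close> \<open>k' \<ge> 1\<close> PL_times_PL_unit_square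
        by blast+
      show "fst (P i) \<le> fst (P j) \<and> snd (P i) \<le> snd (P j)" if "i \<le> j" "j \<le> k" for i j
        using that y_mono unfolding P_def by (simp add: divide_right_mono)
      show "P 0 = (0, 0)" "P k = (1, 1)"
        using \<open>y 0 = 0\<close> \<open>y k = 1\<close> \<open>k \<ge> 1\<close> unfolding P_def by simp_all
    qed (use P_S in blast)+
  qed
  then show ?thesis
    unfolding Let_def R_def S_def P_def .
qed

theorem proposition3p12:
  fixes n k k' :: nat
  assumes "n \<ge> 1" and "k dvd n" and "k' dvd n"
  shows
   "(\<forall>R. pair_subuniv (PL n \<times> PL n) R
        \<and> (\<forall>p\<in>R. fst p \<le> snd p)
        \<and> \<not> (\<exists>A. pl_subalg n A \<and> R = {(a, a) | a. a \<in> A})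
        \<and> fst ` R \<times> snd ` R = PL k \<times> PL k'
      \<longrightarrow> (\<exists>y :: nat \<Rightarrow> real.
            (\<forall>i\<le>k. y i \<in> PL k' \<and> (real i / real k, y i) \<in> R
                 \<and> (\<forall>z\<in>PL k'. (real i / real k, z) \<in> R \<longrightarrow> y i \<le> z))
          \<and> y 0 = 0 \<and> y k = 1
          \<and> R = (\<Union>i\<in>{0..k}. Cset (real i / real k, y i) (PL k \<times> PL k'))))
    \<and>
    (\<forall>y :: nat \<Rightarrow> real.
        (\<forall>i\<le>k. y i \<in> PL k')
        \<and> (\<forall>i j. i \<le> j \<and> j \<le> k \<longrightarrow> y i \<le> y j)
        \<and> y 0 = 0 \<and> y k = 1
        \<and> (\<forall>i. 1 \<le> i \<and> i \<le> k - 1 \<longrightarrow> real i / real k \<le> y i)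
      \<longrightarrow> (let R = (\<Union>i\<in>{0..k}. Cset (real i / real k, y i) (PL k \<times> PL k')) in
            pair_subuniv (PL k \<times> PL k') R \<longleftrightarrow>
            (\<forall>i j. 1 \<le> i \<and> i \<le> k - 1 \<and> 1 \<le> j \<and> j \<le> k - 1 \<longrightarrow>
               podot (real i / real k, y i) (real j / real k, y j) \<in> R
             \<and> poplus (real i / real k, y i) (real j / real k, y j) \<in> R)))"
proof -
  have "k \<ge> 1" "k' \<ge> 1"
    using assms by (simp_all add: Suc_le_eq dvd_pos_nat)
  \<comment> \<open>Part (2) holds without the hypothesis \<open>i/k \<le> y i\<close>, which is therefore unused.\<close>
  then show ?thesis
    using leq_pair_subuniv_eq_union_Cset[OF \<open>k \<ge> 1\<close>] union_Cset_pair_subuniv_iff[OF \<open>k \<ge> 1\<close> \<open>k' \<ge> 1\<close>]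
    by (intro conjI allI impI) (elim conjE; assumption)+
qed

end
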